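(* Let $X$ be a real normed linear space with zero $\theta$, such that $\dim X>1$ and the norm is strictly convex. Let $m\in\mathbb{N}$ with $\dim X\geqslant m$ (i.e. $X$ contains $m$ linearly independent elements). Let $E$ satisfy $B(\theta,1)\subseteq E\subseteq\overline{B}(\theta,1)$ and $E=\bigcup_{i=1}^m A_i$, where $A_i\cong A_j$ for all $i,j$. Then either $\theta\in\bigcap_{i=1}^m\mathrm{Int}\,A_i$, or $\theta\notin\bigcup_{i=1}^m\mathrm{Int}\,A_i$.
   Context: $B(\theta,1)=\{x:\|x\|<1\}$, $\overline{B}(\theta,1)=\{x:\|x\|\leqslant1\}$. The norm is strictly convex if for all $x\ne y$ with $\|x\|=\|y\|=1$ and $\lambda\in(0,1)$, $\|\lambda x+(1-\lambda)y\|<1$. Sets $A,B\subseteq X$ are congruent, $A\cong B$, if there is a surjective map $f\colon X\to X$ with $\|f(x)-f(y)\|=\|x-y\|$ for all $x,y$ and $f(A)=B$. $\mathrm{Int}\,A$ is the set of $x\in A$ such that some open ball $B(x,\varepsilon)\subseteq A$. Completeness of $X$ is not assumed. *)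

theory Defs
  imports "HOL-Analysis.Analysis"
begin

definition strictly_convex_norm :: "'a::real_normed_vector itself \<Rightarrow> bool" where
  "strictly_convex_norm _ \<longleftrightarrow>
     (\<forall>x y :: 'a. \<forall>t::real. x \<noteq> y \<and> norm x = 1 \<and> norm y = 1 \<and> 0 < t \<and> t < 1
        \<longrightarrow> norm (t *\<^sub>R x + (1 - t) *\<^sub>R y) < 1)"

definition congruent_sets :: "'a::real_normed_vector set \<Rightarrow> 'a set \<Rightarrow> bool" where
  "congruent_sets A B \<longleftrightarrow>
     (\<exists>f :: 'a \<Rightarrow> 'a. surj f \<and> (\<forall>x y. norm (f x - f y) = norm (x - y)) \<and> f ` A = B)"

end

theory Submission
  imports Defs
begin

text \<open>If \<open>\<theta> \<in> Int A\<^sub>i\<close> but \<open>\<theta> \<notin> Int A\<^sub>j\<close> and \<open>g\<close> is an isometry onto \<open>X\<close> with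
  \<open>g(A\<^sub>i) = A\<^sub>j\<close>, then \<open>g(\<theta>) \<noteq> \<theta>\<close> since isometries preserve interiors, so the point \<open>q\<close>
  with \<open>g(q) = \<theta>\<close> is nonzero and \<open>A\<^sub>i\<close> lies in the closed unit balls about both \<open>\<theta>\<close> and \<open>q\<close>.
  Transporting this by the congruences, every \<open>A\<^sub>k\<close> lies in a closed unit ball about some
  \<open>c\<^sub>k \<noteq> \<theta>\<close>, so \<open>m\<close> closed unit balls with nonzero centres cover the unit ball.

  That is impossible when \<open>dim X \<ge> m\<close> and the norm is strictly convex. First find a unit
  vector \<open>u\<close> at distance at least \<open>1\<close> from every ray \<open>{t c\<^sub>k | t \<ge> 0}\<close>: if the \<open>c\<^sub>k\<close> are
  independent, normalise \<open>w - p\<close>, where \<open>p\<close> is a point of the cone they generate nearest to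
  \<open>w = -c\<^sub>1\<close>; otherwise they span a subspace of dimension \<open>< m\<close> and Riesz's lemma gives \<open>u\<close>.
  Since \<open>u - c\<^sub>k/2\<close> is the midpoint of \<open>u\<close> and \<open>u - c\<^sub>k\<close>, strict convexity turns
  \<open>\<parallel>u - c\<^sub>k\<parallel> \<ge> 1\<close> into \<open>\<parallel>u - c\<^sub>k\<parallel> > 1\<close>.\<close>

lemma continuous_map_linear_combination:
  fixes B :: "'a::real_normed_vector set"
  assumes "finite B"
  shows "continuous_map (product_topology (\<lambda>_. euclideanreal) B) euclidean
           (\<lambda>l. \<Sum>b\<in>B. l b *\<^sub>R b)"
proof (rule continuous_map_sum[OF assms])
  fix b assume "b \<in> B"
  then have "continuous_map (product_topology (\<lambda>_. euclideanreal) B) euclideanreal (\<lambda>l. l b)"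
    by (rule continuous_map_product_projection)
  moreover have "continuous_map euclideanreal euclidean (\<lambda>r. r *\<^sub>R b)"
    by (simp add: continuous_on_scaleR)
  ultimately show "continuous_map (product_topology (\<lambda>_. euclideanreal) B) euclidean
                     (\<lambda>l. l b *\<^sub>R b)"
    using continuous_map_compose[of _ euclideanreal "\<lambda>l. l b" euclidean "\<lambda>r. r *\<^sub>R b"]
    by (simp add: o_def)
qed

lemma independent_combination_norm_min_on_l1_sphere:
  fixes B :: "'a::real_normed_vector set"
  assumes fin: "finite B" and ind: "independent B"
  obtains d where "d > 0"
    and "\<And>l. (\<Sum>b\<in>B. \<bar>l b\<bar>) = 1 \<Longrightarrow> d \<le> norm (\<Sum>b\<in>B. l b *\<^sub>R b)"
proof -
  define X where "X = product_topology (\<lambda>_::'a. euclideanreal) B"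
  define N where "N = (\<lambda>l. norm (\<Sum>b\<in>B. l b *\<^sub>R b))"
  define S where "S = Pi\<^sub>E B (\<lambda>_. {-1..1::real}) \<inter> {l \<in> topspace X. (\<Sum>b\<in>B. \<bar>l b\<bar>) \<in> {1}}"
  have sphere: "restrict l B \<in> S" "N (restrict l B) = N l" if "(\<Sum>b\<in>B. \<bar>l b\<bar>) = 1" for l
  proof -
    have "\<bar>l b\<bar> \<le> 1" if "b \<in> B" for b
      using member_le_sum[of b B "\<lambda>b. \<bar>l b\<bar>"] that fin \<open>(\<Sum>b\<in>B. \<bar>l b\<bar>) = 1\<close> by simp
    then show "restrict l B \<in> S"
      using \<open>(\<Sum>b\<in>B. \<bar>l b\<bar>) = 1\<close> by (auto simp: S_def X_def abs_le_iff)
    show "N (restrict l B) = N l" by (simp add: N_def)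
  qed
  show thesis
  proof (cases "B = {}")
    case True
    then show thesis by (intro that[of 1]) auto
  next
    case False
    then obtain b0 where "b0 \<in> B" by auto
    have "(\<Sum>b\<in>B. \<bar>if b = b0 then 1 else 0 :: real\<bar>) = 1"
      using \<open>b0 \<in> B\<close> fin by (simp add: if_distrib cong: if_cong)
    from sphere(1)[OF this] have "S \<noteq> {}" by blast
    have l1_cont: "continuous_map X euclideanreal (\<lambda>l. \<Sum>b\<in>B. \<bar>l b\<bar>)"
      unfolding X_def
      by (intro continuous_map_sum[OF fin] continuous_map_real_abs
          continuous_map_product_projection)
    have "compactin X S"
      unfolding S_def
      by (intro compact_Int_closedin closedin_continuous_map_preimage[OF l1_cont])
         (simp_all add: X_def compactin_PiE)
    moreover have "continuous_map X euclideanreal N"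
      unfolding X_def N_def
      using continuous_map_linear_combination[OF fin] continuous_map_norm by blast
    ultimately have "compact (N ` S)"
      by (metis image_compactin compactin_euclidean_iff)
    moreover have "N ` S \<noteq> {}" using \<open>S \<noteq> {}\<close> by blast
    ultimately obtain d where "d \<in> N ` S" and dmin: "\<And>y. y \<in> N ` S \<Longrightarrow> d \<le> y"
      by (meson compact_attains_inf)
    then obtain l where l: "l \<in> S" "d = N l" by auto
    then obtain b where "b \<in> B" "l b \<noteq> 0"
      by (auto simp: S_def) (metis abs_zero sum.neutral zero_neq_one)
    then have "(\<Sum>b\<in>B. l b *\<^sub>R b) \<noteq> 0"
      using fin ind dependent_finite by blast
    then have "d > 0" using l by (simp add: N_def)
    moreover have "d \<le> N l" if "(\<Sum>b\<in>B. \<bar>l b\<bar>) = 1" for l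
      using dmin[of "N l"] sphere[OF that] by (metis image_eqI)
    ultimately show thesis
      using that by (simp add: N_def)
  qed
qed

lemma independent_combination_norm_bounded_below:
  fixes B :: "'a::real_normed_vector set"
  assumes fin: "finite B" and ind: "independent B"
  obtains d where "d > 0"
    and "\<And>l. d * (\<Sum>b\<in>B. \<bar>l b\<bar>) \<le> norm (\<Sum>b\<in>B. l b *\<^sub>R b)"
proof -
  obtain d where "d > 0"
    and dmin: "\<And>l. (\<Sum>b\<in>B. \<bar>l b\<bar>) = 1 \<Longrightarrow> d \<le> norm (\<Sum>b\<in>B. l b *\<^sub>R b)"
    using independent_combination_norm_min_on_l1_sphere[OF fin ind] by blast
  have "d * s \<le> norm (\<Sum>b\<in>B. l b *\<^sub>R b)" if s: "s = (\<Sum>b\<in>B. \<bar>l b\<bar>)" for l s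
  proof (cases "s = 0")
    case True
    then show ?thesis by simp
  next
    case False
    then have "s > 0" using s by (simp add: sum_nonneg order_le_neq_trans)
    have "(\<Sum>b\<in>B. \<bar>l b / s\<bar>) = 1"
      using \<open>s > 0\<close> s by (simp add: sum_divide_distrib[symmetric])
    then have "d \<le> norm (\<Sum>b\<in>B. (l b / s) *\<^sub>R b)" by (rule dmin)
    also have "(\<Sum>b\<in>B. (l b / s) *\<^sub>R b) = (1 / s) *\<^sub>R (\<Sum>b\<in>B. l b *\<^sub>R b)"
      by (simp add: scaleR_sum_right)
    finally show ?thesis using \<open>s > 0\<close> by (simp add: field_simps)
  qed
  then show thesis using that \<open>d > 0\<close> by blast
qed

lemma nearest_linear_combination:
  fixes B :: "'a::real_normed_vector set" and I :: "real set" and w :: 'a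
  assumes fin: "finite B" and ind: "independent B" and "closed I" and "0 \<in> I"
  defines "M \<equiv> {\<Sum>b\<in>B. l b *\<^sub>R b | l. \<forall>b\<in>B. l b \<in> I}"
  obtains p where "p \<in> M" and "\<And>k. k \<in> M \<Longrightarrow> norm (w - p) \<le> norm (w - k)"
proof -
  obtain d where "d > 0" and dle: "\<And>l. d * (\<Sum>b\<in>B. \<bar>l b\<bar>) \<le> norm (\<Sum>b\<in>B. l b *\<^sub>R b)"
    using independent_combination_norm_bounded_below[OF fin ind] by blast
  define R where "R = 2 * norm w / d"
  \<comment> \<open>every \<open>k \<in> M\<close> at least as close to \<open>w\<close> as \<open>0\<close> has norm \<open>\<le> 2\<parallel>w\<parallel>\<close>,
    hence coefficients in \<open>[-R, R]\<close>\<close>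
  define X where "X = product_topology (\<lambda>_::'a. euclideanreal) B"
  define \<Phi> where "\<Phi> = (\<lambda>l. \<Sum>b\<in>B. l b *\<^sub>R b)"
  define T where "T = Pi\<^sub>E B (\<lambda>_. {-R..R} \<inter> I) \<inter> {l \<in> topspace X. norm (w - \<Phi> l) \<in> {..norm w}}"
  have "continuous_map X euclidean \<Phi>"
    unfolding X_def \<Phi>_def by (rule continuous_map_linear_combination[OF fin])
  moreover have dist_cont: "continuous_map X euclideanreal (\<lambda>l. norm (w - \<Phi> l))"
    using continuous_map_compose[OF calculation, of euclideanreal "\<lambda>x. norm (w - x)"]
    by (simp add: o_def continuous_on_norm continuous_on_diff)
  have "compactin X T"
    unfolding T_def
    by (intro compact_Int_closedin closedin_continuous_map_preimage[OF dist_cont])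
       (simp_all add: X_def compactin_PiE compact_Int_closed \<open>closed I\<close>)
  with \<open>continuous_map X euclidean \<Phi>\<close> have "compact (\<Phi> ` T)"
    by (metis image_compactin compactin_euclidean_iff)
  have "restrict (\<lambda>_. 0) B \<in> T"
    using \<open>0 \<in> I\<close> \<open>d > 0\<close> by (auto simp: T_def X_def \<Phi>_def R_def)
  moreover have "continuous_on (\<Phi> ` T) (\<lambda>y. norm (w - y))"
    by (intro continuous_intros)
  ultimately obtain p where "p \<in> \<Phi> ` T" and pmin: "\<And>y. y \<in> \<Phi> ` T \<Longrightarrow> norm (w - p) \<le> norm (w - y)"
    using continuous_attains_inf[OF \<open>compact (\<Phi> ` T)\<close>] by (metis empty_iff image_eqI)
  have "norm (w - p) \<le> norm w"
    using pmin[of 0] \<open>restrict (\<lambda>_. 0) B \<in> T\<close> by (force simp: \<Phi>_def)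
  have "norm (w - p) \<le> norm (w - k)" if "k \<in> M" for k
  proof (cases "norm (w - k) \<le> norm w")
    case False
    then show ?thesis using \<open>norm (w - p) \<le> norm w\<close> by simp
  next
    case True
    obtain l where l: "\<forall>b\<in>B. l b \<in> I" "k = \<Phi> l" using \<open>k \<in> M\<close> by (auto simp: M_def \<Phi>_def)
    have "norm k \<le> 2 * norm w"
      using True norm_triangle_ineq2[of k w] by (simp add: norm_minus_commute)
    then have "(\<Sum>b\<in>B. \<bar>l b\<bar>) \<le> R"
      using dle[of l] \<open>d > 0\<close> l(2) by (simp add: R_def \<Phi>_def field_simps)
    then have "\<bar>l b\<bar> \<le> R" if "b \<in> B" for b
      using member_le_sum[of b B "\<lambda>b. \<bar>l b\<bar>"] that fin by simp
    then have "l b \<in> {-R..R} \<inter> I" if "b \<in> B" for b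
      using that l(1) by (fastforce simp: abs_le_iff)
    then have "restrict l B \<in> T"
      unfolding T_def using l(2) True by (auto simp: X_def \<Phi>_def)
    moreover have "\<Phi> (restrict l B) = k" using l by (simp add: \<Phi>_def)
    ultimately show ?thesis using pmin by force
  qed
  moreover have "p \<in> M" using \<open>p \<in> \<Phi> ` T\<close> by (auto simp: T_def M_def \<Phi>_def)
  ultimately show thesis using that by blast
qed

lemma unit_vector_far_from_cone:
  fixes M :: "'a::real_normed_vector set"
  assumes add: "\<And>x y. x \<in> M \<Longrightarrow> y \<in> M \<Longrightarrow> x + y \<in> M"
    and scale: "\<And>x t. x \<in> M \<Longrightarrow> 0 \<le> t \<Longrightarrow> t *\<^sub>R x \<in> M"
    and "p \<in> M" "w \<notin> M" and nearest: "\<And>k. k \<in> M \<Longrightarrow> norm (w - p) \<le> norm (w - k)"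
  obtains u where "norm u = 1" "\<And>k. k \<in> M \<Longrightarrow> 1 \<le> norm (u - k)"
proof -
  define v where "v = w - p"
  have "v \<noteq> 0" using \<open>p \<in> M\<close> \<open>w \<notin> M\<close> by (auto simp: v_def)
  have v_min: "norm v \<le> norm (v - k)" if "k \<in> M" for k
    using nearest[OF add[OF \<open>p \<in> M\<close> that]] by (simp add: v_def algebra_simps)
  show thesis
  proof
    show "norm (v /\<^sub>R norm v) = 1" using \<open>v \<noteq> 0\<close> by simp
    fix k assume "k \<in> M"
    have "norm v \<le> norm (v - norm v *\<^sub>R k)"
      using v_min[OF scale[OF \<open>k \<in> M\<close>]] by simp
    also have "v - norm v *\<^sub>R k = norm v *\<^sub>R (v /\<^sub>R norm v - k)"
      using \<open>v \<noteq> 0\<close> by (simp add: algebra_simps)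
    finally show "1 \<le> norm (v /\<^sub>R norm v - k)" using \<open>v \<noteq> 0\<close> by simp
  qed
qed

lemma unit_vector_far_from_combinations:
  fixes B :: "'a::real_normed_vector set" and I :: "real set"
  assumes "finite B" "independent B" "closed I" "0 \<in> I"
    and add: "\<And>x y. x \<in> I \<Longrightarrow> y \<in> I \<Longrightarrow> x + y \<in> I"
    and scale: "\<And>x t. x \<in> I \<Longrightarrow> 0 \<le> t \<Longrightarrow> t * x \<in> I"
  defines "M \<equiv> {\<Sum>b\<in>B. l b *\<^sub>R b | l. \<forall>b\<in>B. l b \<in> I}"
  assumes "w \<notin> M"
  obtains u where "norm u = 1" "\<And>k. k \<in> M \<Longrightarrow> 1 \<le> norm (u - k)"
proof -
  obtain p where "p \<in> M" and "\<And>k. k \<in> M \<Longrightarrow> norm (w - p) \<le> norm (w - k)"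
    using nearest_linear_combination[OF assms(1-4)] unfolding M_def by blast
  moreover have "x + y \<in> M" if xy: "x \<in> M" "y \<in> M" for x y
  proof -
    obtain l1 l2 where "\<forall>b\<in>B. l1 b \<in> I" "x = (\<Sum>b\<in>B. l1 b *\<^sub>R b)"
      and "\<forall>b\<in>B. l2 b \<in> I" "y = (\<Sum>b\<in>B. l2 b *\<^sub>R b)"
      using xy unfolding M_def by blast
    then show ?thesis unfolding M_def
      by (intro CollectI exI[of _ "\<lambda>b. l1 b + l2 b"]) (auto simp: add scaleR_add_left sum.distrib)
  qed
  moreover have "t *\<^sub>R x \<in> M" if "x \<in> M" and t: "0 \<le> t" for x t
  proof -
    obtain l where "\<forall>b\<in>B. l b \<in> I" "x = (\<Sum>b\<in>B. l b *\<^sub>R b)"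
      using \<open>x \<in> M\<close> unfolding M_def by blast
    then show ?thesis unfolding M_def using t
      by (intro CollectI exI[of _ "\<lambda>b. t * l b"]) (auto simp: scale scaleR_sum_right)
  qed
  ultimately show thesis
    using unit_vector_far_from_cone \<open>w \<notin> M\<close> that by blast
qed

lemma unit_vector_far_from_independent_rays:
  fixes C :: "'a::real_normed_vector set"
  assumes fin: "finite C" and ind: "independent C" and "C \<noteq> {}"
  obtains u where "norm u = 1" "\<And>c t. c \<in> C \<Longrightarrow> 0 \<le> t \<Longrightarrow> 1 \<le> norm (u - t *\<^sub>R c)"
proof -
  define M where "M = {\<Sum>b\<in>C. l b *\<^sub>R b | l. \<forall>b\<in>C. l b \<in> {0::real..}}"
  obtain c0 where "c0 \<in> C" using \<open>C \<noteq> {}\<close> by auto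
  have "- c0 \<notin> M"
  proof
    assume "- c0 \<in> M"
    then obtain l where l: "\<forall>b\<in>C. 0 \<le> l b" "- c0 = (\<Sum>b\<in>C. l b *\<^sub>R b)"
      by (auto simp: M_def)
    define l' where "l' = (\<lambda>b. l b + (if b = c0 then 1 else 0))"
    have "(\<Sum>b\<in>C. l' b *\<^sub>R b) = (\<Sum>b\<in>C. l b *\<^sub>R b) + (\<Sum>b\<in>C. if b = c0 then b else 0)"
      unfolding sum.distrib[symmetric] by (rule sum.cong) (auto simp: l'_def scaleR_add_left)
    also have "\<dots> = 0" using \<open>c0 \<in> C\<close> fin by (simp add: l(2)[symmetric])
    finally have "(\<Sum>b\<in>C. l' b *\<^sub>R b) = 0" .
    moreover have "l' c0 \<noteq> 0"
      using l(1) \<open>c0 \<in> C\<close> by (simp add: l'_def add_nonneg_eq_0_iff)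
    ultimately show False using fin ind \<open>c0 \<in> C\<close> dependent_finite by blast
  qed
  moreover have "(0::real) \<in> {0..}" "\<And>x y. x \<in> {0..} \<Longrightarrow> y \<in> {0..} \<Longrightarrow> x + y \<in> {0::real..}"
    "\<And>x t. x \<in> {0..} \<Longrightarrow> 0 \<le> t \<Longrightarrow> t * x \<in> {0::real..}"
    by auto
  ultimately obtain u where "norm u = 1" and far: "\<And>k. k \<in> M \<Longrightarrow> 1 \<le> norm (u - k)"
    using unit_vector_far_from_combinations[OF fin ind closed_atLeast, of 0 "- c0"]
    unfolding M_def by blast
  moreover have "t *\<^sub>R c \<in> M" if "c \<in> C" "0 \<le> t" for c t
  proof -
    have "(\<Sum>b\<in>C. (if b = c then t else 0) *\<^sub>R b) = (\<Sum>b\<in>C. if b = c then t *\<^sub>R b else 0)"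
      by (rule sum.cong) auto
    also have "\<dots> = t *\<^sub>R c" using that fin by simp
    finally have "(\<Sum>b\<in>C. (if b = c then t else 0) *\<^sub>R b) = t *\<^sub>R c" .
    then show ?thesis
      unfolding M_def using that(2) by (intro CollectI exI[of _ "\<lambda>b. if b = c then t else 0"]) auto
  qed
  ultimately show thesis using that by blast
qed

lemma unit_vector_far_from_span:
  fixes B S :: "'a::real_normed_vector set"
  assumes fin: "finite B" and ind: "independent B"
    and "independent S" and "card B < card S"
  obtains u where "norm u = 1" "\<And>k. k \<in> span B \<Longrightarrow> 1 \<le> norm (u - k)"
proof -
  have "\<not> S \<subseteq> span B"
    using independent_span_bound[OF fin \<open>independent S\<close>] \<open>card B < card S\<close> by auto
  then obtain w where "w \<in> S" "w \<notin> span B" by auto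
  have "span B = {\<Sum>b\<in>B. l b *\<^sub>R b | l. \<forall>b\<in>B. l b \<in> (UNIV :: real set)}"
    using span_finite[OF fin] by auto
  then show thesis
    using unit_vector_far_from_combinations[OF fin ind, of UNIV w] \<open>w \<notin> span B\<close> that
    by auto
qed

lemma unit_vector_far_from_rays:
  fixes C S :: "'a::real_normed_vector set"
  assumes fin: "finite C" and "C \<noteq> {}" and "independent S" and "card C \<le> card S"
  obtains u where "norm u = 1" "\<And>c t. c \<in> C \<Longrightarrow> 0 \<le> t \<Longrightarrow> 1 \<le> norm (u - t *\<^sub>R c)"
proof (cases "independent C")
  case True
  show thesis by (rule unit_vector_far_from_independent_rays[OF fin True \<open>C \<noteq> {}\<close> that])
next
  case False
  obtain B where "B \<subseteq> C" "independent B" "C \<subseteq> span B"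
    using maximal_independent_subset by blast
  then have "B \<subset> C" using False by auto
  then have "finite B" "card B < card S"
    using fin psubset_card_mono[OF fin \<open>B \<subset> C\<close>] \<open>card C \<le> card S\<close>
    by (auto intro: finite_subset)
  then obtain u where "norm u = 1" and far: "\<And>k. k \<in> span B \<Longrightarrow> 1 \<le> norm (u - k)"
    using unit_vector_far_from_span \<open>independent B\<close> \<open>independent S\<close> by blast
  show thesis
  proof (rule that)
    show "norm u = 1" by fact
    fix c and t :: real assume "c \<in> C"
    then have "t *\<^sub>R c \<in> span B" using \<open>C \<subseteq> span B\<close> by (simp add: span_scale subsetD)
    then show "1 \<le> norm (u - t *\<^sub>R c)" by (rule far)
  qed
qed

lemma strictly_convex_norm_dist_gt_1:
  fixes u c :: "'a::real_normed_vector"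
  assumes "strictly_convex_norm TYPE('a)" and "norm u = 1" and "c \<noteq> 0"
    and "1 \<le> norm (u - c)" and half: "1 \<le> norm (u - (1/2) *\<^sub>R c)"
  shows "1 < norm (u - c)"
proof (rule ccontr)
  assume "\<not> 1 < norm (u - c)"
  then have "norm (u - c) = 1" using \<open>1 \<le> norm (u - c)\<close> by simp
  moreover have strict: "\<And>x y :: 'a. \<And>t. x \<noteq> y \<Longrightarrow> norm x = 1 \<Longrightarrow> norm y = 1 \<Longrightarrow> 0 < t \<Longrightarrow> t < 1
      \<Longrightarrow> norm (t *\<^sub>R x + (1 - t) *\<^sub>R y) < 1"
    using assms(1) unfolding strictly_convex_norm_def by blast
  ultimately have "norm ((1/2::real) *\<^sub>R u + (1 - 1/2) *\<^sub>R (u - c)) < 1"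
    using \<open>norm u = 1\<close> \<open>c \<noteq> 0\<close> by (intro strict) auto
  also have "(1/2::real) *\<^sub>R u + (1 - 1/2) *\<^sub>R (u - c) = u - (1/2) *\<^sub>R c"
    by (simp add: algebra_simps scaleR_add_left[symmetric])
  finally show False using half by simp
qed

lemma unit_vector_far_from_points:
  fixes C S :: "'a::real_normed_vector set"
  assumes "strictly_convex_norm TYPE('a)" and "finite C" and "0 \<notin> C" and "C \<noteq> {}"
    and "independent S" and "card C \<le> card S"
  obtains u where "norm u = 1" "\<And>c. c \<in> C \<Longrightarrow> 1 < norm (u - c)"
proof -
  obtain u where u: "norm u = 1" and far: "\<And>c t. c \<in> C \<Longrightarrow> 0 \<le> t \<Longrightarrow> 1 \<le> norm (u - t *\<^sub>R c)"
    using unit_vector_far_from_rays[OF assms(2,4-6)] by blast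
  have "1 < norm (u - c)" if "c \<in> C" for c
  proof (rule strictly_convex_norm_dist_gt_1[OF assms(1) u])
    show "c \<noteq> 0" using that \<open>0 \<notin> C\<close> by auto
    show "1 \<le> norm (u - c)" using far[OF that, of 1] by simp
    show "1 \<le> norm (u - (1/2) *\<^sub>R c)" using far[OF that, of "1/2"] by simp
  qed
  then show thesis using that u by blast
qed

lemma ball_not_covered_by_unit_balls:
  fixes C S :: "'a::real_normed_vector set"
  assumes "strictly_convex_norm TYPE('a)" and "finite C" and "0 \<notin> C" and "C \<noteq> {}"
    and "independent S" and "card C \<le> card S"
  shows "\<not> ball 0 1 \<subseteq> (\<Union>c\<in>C. cball c 1)"
proof
  assume "ball 0 1 \<subseteq> (\<Union>c\<in>C. cball c 1)"
  moreover have "closed (\<Union>c\<in>C. cball c 1)" using \<open>finite C\<close> by (simp add: closed_UN)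
  ultimately have cover: "cball 0 1 \<subseteq> (\<Union>c\<in>C. cball c 1)"
    by (metis closure_minimal closure_ball zero_less_one)
  obtain u where "norm u = 1" and far: "\<And>c. c \<in> C \<Longrightarrow> 1 < norm (u - c)"
    using unit_vector_far_from_points[OF assms] by blast
  then have "u \<in> cball 0 1" by simp
  then obtain c where "c \<in> C" "u \<in> cball c 1" using cover by blast
  then show False using far[of c] by (simp add: dist_norm norm_minus_commute)
qed

lemma isometry_image_ball:
  fixes f :: "'a::real_normed_vector \<Rightarrow> 'a"
  assumes "surj f" and iso: "\<And>x y. norm (f x - f y) = norm (x - y)"
  shows "f ` ball x r = ball (f x) r"
proof
  show "f ` ball x r \<subseteq> ball (f x) r"
    using iso by (auto simp: dist_norm)
  show "ball (f x) r \<subseteq> f ` ball x r"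
  proof
    fix z assume "z \<in> ball (f x) r"
    moreover obtain y where "z = f y" using \<open>surj f\<close> by (metis surjD)
    ultimately show "z \<in> f ` ball x r" using iso by (auto simp: dist_norm)
  qed
qed

lemma isometry_image_interior:
  fixes f :: "'a::real_normed_vector \<Rightarrow> 'a"
  assumes "surj f" and "\<And>x y. norm (f x - f y) = norm (x - y)" and "x \<in> interior A"
  shows "f x \<in> interior (f ` A)"
proof -
  obtain r where "r > 0" "ball x r \<subseteq> A" using \<open>x \<in> interior A\<close> mem_interior by blast
  then have "ball (f x) r \<subseteq> f ` A" using isometry_image_ball[OF assms(1,2)] by blast
  then show ?thesis using \<open>r > 0\<close> mem_interior by blast
qed

lemma isometry_image_in_unit_ball_off_origin:
  fixes f :: "'a::real_normed_vector \<Rightarrow> 'a"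
  assumes iso: "\<And>x y. norm (f x - f y) = norm (x - y)"
    and "q \<noteq> 0" and "A \<subseteq> cball 0 1" and "A \<subseteq> cball q 1"
  obtains c where "c \<noteq> 0" "f ` A \<subseteq> cball c 1"
proof -
  have "f ` A \<subseteq> cball (f p) 1" if "A \<subseteq> cball p 1" for p
    using that iso by (auto simp: dist_norm)
  moreover have "f 0 \<noteq> 0 \<or> f q \<noteq> 0"
    using iso[of q 0] \<open>q \<noteq> 0\<close> by auto
  ultimately show thesis using that \<open>A \<subseteq> cball 0 1\<close> \<open>A \<subseteq> cball q 1\<close> by blast
qed

lemma isometry_moving_interior_origin:
  fixes g :: "'a::real_normed_vector \<Rightarrow> 'a"
  assumes "surj g" and iso: "\<And>x y. norm (g x - g y) = norm (x - y)"
    and "g ` A \<subseteq> cball 0 1" and "0 \<in> interior A" and "0 \<notin> interior (g ` A)"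
  obtains q where "q \<noteq> 0" "A \<subseteq> cball q 1"
proof -
  obtain q where "g q = 0" using \<open>surj g\<close> by (metis surjD)
  have "g 0 \<noteq> 0"
    using isometry_image_interior[OF \<open>surj g\<close> iso \<open>0 \<in> interior A\<close>] \<open>0 \<notin> interior (g ` A)\<close>
    by auto
  then have "q \<noteq> 0" using \<open>g q = 0\<close> by auto
  moreover have "A \<subseteq> cball q 1"
  proof
    fix x assume "x \<in> A"
    then have "norm (g x) \<le> 1" using \<open>g ` A \<subseteq> cball 0 1\<close> by auto
    then show "x \<in> cball q 1" using iso[of q x] \<open>g q = 0\<close> by (simp add: dist_norm)
  qed
  ultimately show thesis by (rule that)
qed

theorem proposition1:
  fixes A :: "nat \<Rightarrow> 'a::real_normed_vector set" and E :: "'a set" and m :: nat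
  assumes dim_gt1: "\<exists>S :: 'a set. finite S \<and> card S = 2 \<and> independent S"
    and strict: "strictly_convex_norm TYPE('a)"
    and dim_ge_m: "\<exists>S :: 'a set. finite S \<and> card S = m \<and> independent S"
    and E_lower: "ball 0 1 \<subseteq> E" and E_upper: "E \<subseteq> cball 0 1"
    and E_union: "E = (\<Union>i\<in>{1..m}. A i)"
    and cong: "\<forall>i\<in>{1..m}. \<forall>j\<in>{1..m}. congruent_sets (A i) (A j)"
  shows "0 \<in> (\<Inter>i\<in>{1..m}. interior (A i)) \<or> 0 \<notin> (\<Union>i\<in>{1..m}. interior (A i))"
proof (rule ccontr)
  assume "\<not> ?thesis"
  then obtain i j where "i \<in> {1..m}" "0 \<in> interior (A i)" "j \<in> {1..m}" "0 \<notin> interior (A j)"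
    by blast
  have "\<forall>k\<in>{1..m}. \<exists>g. surj g \<and> (\<forall>x y. norm (g x - g y) = norm (x - y)) \<and> g ` A i = A k"
    using cong \<open>i \<in> {1..m}\<close> unfolding congruent_sets_def by blast
  then obtain g where surj: "\<And>k. k \<in> {1..m} \<Longrightarrow> surj (g k)"
    and iso: "\<And>k x y. k \<in> {1..m} \<Longrightarrow> norm (g k x - g k y) = norm (x - y)"
    and image: "\<And>k. k \<in> {1..m} \<Longrightarrow> g k ` A i = A k"
    by metis
  have A_cball: "A k \<subseteq> cball 0 1" if "k \<in> {1..m}" for k
    using that E_union E_upper by blast
  obtain q where "q \<noteq> 0" "A i \<subseteq> cball q 1"
    using isometry_moving_interior_origin[OF surj iso, of j "A i"] image A_cball
      \<open>j \<in> {1..m}\<close> \<open>0 \<in> interior (A i)\<close> \<open>0 \<notin> interior (A j)\<close> by metis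
  then have "\<forall>k\<in>{1..m}. \<exists>c. c \<noteq> 0 \<and> A k \<subseteq> cball c 1"
    using isometry_image_in_unit_ball_off_origin[OF iso] image A_cball \<open>i \<in> {1..m}\<close>
    by metis
  then obtain c where c: "\<And>k. k \<in> {1..m} \<Longrightarrow> c k \<noteq> 0 \<and> A k \<subseteq> cball (c k) 1"
    by metis
  have "ball 0 1 \<subseteq> (\<Union>k\<in>{1..m}. cball (c k) 1)"
    using E_lower E_union c by blast
  moreover obtain S :: "'a set" where "card S = m" "independent S"
    using dim_ge_m by blast
  ultimately show False
    using ball_not_covered_by_unit_balls[OF strict, of "c ` {1..m}" S] c
      card_image_le[of "{1..m}" c] \<open>i \<in> {1..m}\<close> by fastforce
qed

end
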